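(* Let $\mathcal{I}=(I,w,v,m,k)$ be a CMK instance, $S\subseteq I$, and $\delta\in(0,0.1)$ with $\delta^{-1}\in\mathbb{N}$. Let $L=\{i\in S:\tilde w(i)\ge\delta\}$. Then for every $y\in([0,1]\cap\mathbb{Q})^I$ with $\mathrm{supp}(y)\subseteq S\setminus L$ there is a fractional solution $x$ such that $\mathrm{cover}(x)=y$ and $\|x\|\le 2\sum_{i\in I}y_i\,\tilde w(i)+1$.
   Context: A CMK instance is a tuple $\mathcal{I}=(I,w,v,m,k)$ with $I$ a finite item set, $w:I\to[0,1]$, $v:I\to\mathbb{R}_{\ge0}$, $m,k\in\mathbb{N}_{>0}$. The adjusted weight of $i\in I$ is $\tilde w(i)=w(i)+\frac1k$. A configuration is $C\subseteq I$ with $|C|\le k$ and $\sum_{i\in C}w(i)\le1$; $\mathcal{C}$ is the set of configurations and $\mathcal{C}(i)=\{C\in\mathcal{C}:i\in C\}$. A fractional solution is $x\in\mathbb{R}_{\ge0}^{\mathcal{C}}$; $\mathrm{cover}_i(x)=\sum_{C\in\mathcal{C}(i)}x_C$ and $\|x\|=\sum_{C}x_C$. $\mathrm{supp}(y)=\{i:y_i\ne0\}$. *)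

theory Defs
  imports Complex_Main
begin

definition cmk_instance :: "'a set \<Rightarrow> ('a \<Rightarrow> real) \<Rightarrow> ('a \<Rightarrow> real) \<Rightarrow> nat \<Rightarrow> nat \<Rightarrow> bool" where
  "cmk_instance I w v m k \<longleftrightarrow> finite I \<and> (\<forall>i\<in>I. 0 \<le> w i \<and> w i \<le> 1) \<and> (\<forall>i\<in>I. 0 \<le> v i)
     \<and> m > 0 \<and> k > 0"

definition adj_weight :: "('a \<Rightarrow> real) \<Rightarrow> nat \<Rightarrow> 'a \<Rightarrow> real" where
  "adj_weight w k i = w i + 1 / real k"

definition configs :: "'a set \<Rightarrow> ('a \<Rightarrow> real) \<Rightarrow> nat \<Rightarrow> 'a set set" where
  "configs I w k = {C. C \<subseteq> I \<and> card C \<le> k \<and> sum w C \<le> 1}"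

definition configs_of :: "'a set \<Rightarrow> ('a \<Rightarrow> real) \<Rightarrow> nat \<Rightarrow> 'a \<Rightarrow> 'a set set" where
  "configs_of I w k i = {C \<in> configs I w k. i \<in> C}"

text \<open>A fractional solution is a nonnegative vector indexed by configurations; we represent it
  as a function on sets whose values outside the configurations are irrelevant.\<close>
definition frac_solution :: "'a set \<Rightarrow> ('a \<Rightarrow> real) \<Rightarrow> nat \<Rightarrow> ('a set \<Rightarrow> real) \<Rightarrow> bool" where
  "frac_solution I w k x \<longleftrightarrow> (\<forall>C\<in>configs I w k. 0 \<le> x C)"

definition cover :: "'a set \<Rightarrow> ('a \<Rightarrow> real) \<Rightarrow> nat \<Rightarrow> ('a set \<Rightarrow> real) \<Rightarrow> 'a \<Rightarrow> real" where
  "cover I w k x i = (\<Sum>C\<in>configs_of I w k i. x C)"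

definition sol_norm :: "'a set \<Rightarrow> ('a \<Rightarrow> real) \<Rightarrow> nat \<Rightarrow> ('a set \<Rightarrow> real) \<Rightarrow> real" where
  "sol_norm I w k x = (\<Sum>C\<in>configs I w k. x C)"

end

theory Submission
  imports Defs
begin

text \<open>Peel the support of \<open>y\<close> off in layers. Let \<open>t\<close> be the least nonzero entry of \<open>y\<close>.
  Every item of the support has adjusted weight at most \<open>1/2\<close>, so the support can be packed
  into blocks of adjusted weight at most \<open>1\<close>, which are configurations, using at most
  \<open>2 \<tilde>w(supp y) + 1\<close> blocks: put each item into the block of weight \<open>\<le> 1/2\<close> if there is
  one, and into a new block otherwise, so that at most one block is that light. Giving each block
  value \<open>t\<close> covers \<open>t\<close> on the support; subtract and recurse. Over all layers the terms
  \<open>2 t \<tilde>w(supp)\<close> add up to \<open>2 \<Sum> y\<^sub>i \<tilde>w(i)\<close> and the terms \<open>t\<close> to at most \<open>max y \<le> 1\<close>.\<close>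

definition partition_of :: "'a set \<Rightarrow> 'a set set \<Rightarrow> bool" where
  "partition_of A P \<longleftrightarrow> \<Union>P = A \<and> pairwise disjnt P"

lemma finite_partition_of:
  assumes "finite A" "partition_of A P"
  shows "finite P" and "\<And>G. G \<in> P \<Longrightarrow> finite G"
  using assms by (auto simp: partition_of_def intro: finite_UnionD finite_subset[OF Union_upper])

lemma sum_partition_of:
  assumes "finite A" "partition_of A P"
  shows "sum f A = (\<Sum>G\<in>P. sum f G)"
  using sum.Union_disjoint[of P f] finite_partition_of[OF assms] assms
  by (auto simp: partition_of_def pairwise_def disjnt_def)

lemma partition_of_Diff_block:
  assumes "partition_of A P" "G \<in> P"
  shows "partition_of (A - G) (P - {G})"
  using assms unfolding partition_of_def pairwise_def disjnt_def by blast

lemma partition_of_insert_block: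
  assumes "partition_of A P" "disjnt G A"
  shows "partition_of (G \<union> A) (insert G P)"
  using assms unfolding partition_of_def pairwise_def disjnt_def by blast

lemma card_partition_le_if_at_most_one_light_block:
  fixes f :: "'a \<Rightarrow> real"
  assumes "finite A" "partition_of A P" "\<forall>i\<in>A. 0 \<le> f i"
    and "card {G\<in>P. sum f G \<le> 1/2} \<le> 1"
  shows "real (card P) \<le> 2 * sum f A + 1"
proof -
  let ?heavy = "{G\<in>P. 1/2 < sum f G}" and ?light = "{G\<in>P. sum f G \<le> 1/2}"
  have finP: "finite P" using finite_partition_of[OF assms(1,2)] by blast
  have nonneg: "\<forall>G\<in>P. 0 \<le> sum f G"
    using assms(2,3) by (auto simp: partition_of_def intro!: sum_nonneg)
  have "card P = card ?heavy + card ?light"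
    using finP by (subst card_Un_disjoint[symmetric]) (auto intro: arg_cong[where f = card])
  then have "real (card P) \<le> real (card ?heavy) + 1"
    using assms(4) by linarith
  moreover have "real (card ?heavy) / 2 \<le> (\<Sum>G\<in>?heavy. sum f G)"
    using sum_mono[of ?heavy "\<lambda>_. 1/2" "\<lambda>G. sum f G"] by auto
  moreover have "(\<Sum>G\<in>?heavy. sum f G) \<le> (\<Sum>G\<in>P. sum f G)"
    using finP nonneg by (intro sum_mono2) auto
  ultimately show ?thesis
    using sum_partition_of[OF assms(1,2), of f] by linarith
qed

lemma packing_with_at_most_one_light_block:
  fixes f :: "'a \<Rightarrow> real"
  assumes "finite A" "\<forall>i\<in>A. 0 \<le> f i \<and> f i \<le> 1/2"
  shows "\<exists>P. partition_of A P \<and> (\<forall>G\<in>P. sum f G \<le> 1) \<and> card {G\<in>P. sum f G \<le> 1/2} \<le> 1"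
  using assms
proof (induction A rule: finite_induct)
  case empty
  show ?case by (rule exI[of _ "{}"]) (simp add: partition_of_def)
next
  case (insert a A)
  then obtain P where part: "partition_of A P" and cap: "\<forall>G\<in>P. sum f G \<le> 1"
    and light: "card {G\<in>P. sum f G \<le> 1/2} \<le> 1"
    by auto
  have fa: "0 \<le> f a" "f a \<le> 1/2" using insert.prems by auto
  have finP: "finite P" using finite_partition_of[OF insert.hyps(1) part] by blast
  show ?case
  proof (cases "\<exists>G0\<in>P. sum f G0 \<le> 1/2")
    case True
    then obtain G0 where G0: "G0 \<in> P" "sum f G0 \<le> 1/2" by blast
    let ?G = "insert a G0"
    let ?Q = "insert ?G (P - {G0})"
    have "finite G0" using finite_partition_of[OF insert.hyps(1) part] G0(1) by blast
    moreover have "a \<notin> G0" using G0(1) part insert.hyps(2) by (auto simp: partition_of_def)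
    ultimately have sum_G: "sum f ?G = f a + sum f G0" by simp
    have "{G\<in>P. sum f G \<le> 1/2} = {G0}"
      using light G0 finP by (auto simp: card_le_Suc0_iff_eq)
    then have "{G\<in>?Q. sum f G \<le> 1/2} \<subseteq> {?G}" by auto
    then have "card {G\<in>?Q. sum f G \<le> 1/2} \<le> 1" using card_mono[of "{?G}"] by simp
    moreover have "partition_of (insert a A) ?Q"
    proof -
      have "partition_of (A - G0) (P - {G0})" using part G0(1) by (rule partition_of_Diff_block)
      moreover have "disjnt ?G (A - G0)" using insert.hyps(2) by (auto simp: disjnt_def)
      moreover have "?G \<union> (A - G0) = insert a A" using part G0(1) by (auto simp: partition_of_def)
      ultimately show ?thesis using partition_of_insert_block by metis
    qed
    moreover have "\<forall>G\<in>?Q. sum f G \<le> 1" using cap sum_G fa G0(2) by auto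
    ultimately show ?thesis by blast
  next
    case False
    let ?Q = "insert {a} P"
    have "{G\<in>?Q. sum f G \<le> 1/2} \<subseteq> {{a}}" using False by auto
    then have "card {G\<in>?Q. sum f G \<le> 1/2} \<le> 1" using card_mono[of "{{a}}"] by simp
    moreover have "partition_of (insert a A) ?Q"
      using partition_of_insert_block[OF part, of "{a}"] insert.hyps(2) by (simp add: disjnt_def)
    moreover have "\<forall>G\<in>?Q. sum f G \<le> 1" using cap fa by auto
    ultimately show ?thesis by blast
  qed
qed

lemma bin_packing_small_items:
  fixes f :: "'a \<Rightarrow> real"
  assumes "finite A" "\<forall>i\<in>A. 0 \<le> f i \<and> f i \<le> 1/2"
  shows "\<exists>P. partition_of A P \<and> (\<forall>G\<in>P. sum f G \<le> 1) \<and> real (card P) \<le> 2 * sum f A + 1"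
  using packing_with_at_most_one_light_block[OF assms]
    card_partition_le_if_at_most_one_light_block[OF assms(1)] assms(2)
  by blast

lemma finite_configs: "finite I \<Longrightarrow> finite (configs I w k)"
  by (rule finite_subset[of _ "Pow I"]) (auto simp: configs_def)

lemma in_configs_if_adj_weight_le_1:
  assumes "k > 0" "G \<subseteq> I" "\<forall>i\<in>G. 0 \<le> w i" "sum (adj_weight w k) G \<le> 1"
  shows "G \<in> configs I w k"
proof -
  have split: "sum (adj_weight w k) G = sum w G + real (card G) / real k"
    by (simp add: adj_weight_def sum.distrib)
  have "0 \<le> sum w G" using assms(3) by (simp add: sum_nonneg)
  moreover have "0 \<le> real (card G) / real k" by simp
  ultimately have "real (card G) / real k \<le> 1" and "sum w G \<le> 1"
    using split assms(4) by linarith+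
  then have "card G \<le> k" and "sum w G \<le> 1" using assms(1) by (simp_all add: divide_le_eq)
  then show ?thesis using assms(2) by (simp add: configs_def)
qed

lemma cover_add_uniform_on_partition:
  assumes "finite I" "P \<subseteq> configs I w k" "partition_of A P"
  shows "cover I w k (\<lambda>C. x C + (if C \<in> P then t else 0)) i
           = cover I w k x i + (if i \<in> A then t else 0)"
proof -
  have fin: "finite (configs_of I w k i)"
    using finite_configs[OF assms(1)] by (simp add: configs_of_def)
  have "configs_of I w k i \<inter> P = {G\<in>P. i \<in> G}"
    using assms(2) by (auto simp: configs_of_def)
  then have "(\<Sum>C\<in>configs_of I w k i. if C \<in> P then t else 0) = (\<Sum>C\<in>{G\<in>P. i \<in> G}. t)"
    by (simp add: sum.inter_restrict[OF fin, symmetric])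
  also have "\<dots> = (if i \<in> A then t else 0)"
  proof (cases "i \<in> A")
    case True
    then obtain G where G: "G \<in> P" "i \<in> G" using assms(3) by (auto simp: partition_of_def)
    then have "{G\<in>P. i \<in> G} = {G}"
      using assms(3) by (auto simp: partition_of_def pairwise_def disjnt_def)
    then show ?thesis using True by simp
  next
    case False
    then have "{G\<in>P. i \<in> G} = {}" using assms(3) by (auto simp: partition_of_def)
    then show ?thesis using False by (simp only: sum.empty if_False)
  qed
  finally show ?thesis by (simp add: cover_def sum.distrib)
qed

lemma sol_norm_add_uniform:
  assumes "finite I" "P \<subseteq> configs I w k"
  shows "sol_norm I w k (\<lambda>C. x C + (if C \<in> P then t else 0)) = sol_norm I w k x + t * real (card P)"
proof -
  have "(\<Sum>C\<in>configs I w k. if C \<in> P then t else 0) = (\<Sum>C\<in>P. t)"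
    using assms by (simp add: sum.inter_restrict[OF finite_configs, symmetric] Int_absorb1)
  then show ?thesis by (simp add: sol_norm_def sum.distrib)
qed

lemma frac_solution_add_layer:
  assumes "finite I" "k > 0" "\<forall>i\<in>I. 0 \<le> w i" "A \<subseteq> I" "0 \<le> t"
    and "\<forall>i\<in>A. adj_weight w k i \<le> 1/2"
    and "frac_solution I w k x'"
  shows "\<exists>x. frac_solution I w k x
           \<and> (\<forall>i. cover I w k x i = cover I w k x' i + (if i \<in> A then t else 0))
           \<and> sol_norm I w k x \<le> sol_norm I w k x' + t * (2 * sum (adj_weight w k) A + 1)"
proof -
  have "\<forall>i\<in>A. 0 \<le> adj_weight w k i \<and> adj_weight w k i \<le> 1/2"
    using assms(3,4,6) by (auto simp: adj_weight_def)
  then obtain P where part: "partition_of A P" and cap: "\<forall>G\<in>P. sum (adj_weight w k) G \<le> 1"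
    and card: "real (card P) \<le> 2 * sum (adj_weight w k) A + 1"
    using bin_packing_small_items[OF finite_subset[OF assms(4,1)]] by blast
  have "P \<subseteq> configs I w k"
  proof
    fix G assume "G \<in> P"
    then have "G \<subseteq> A" using part by (auto simp: partition_of_def)
    then show "G \<in> configs I w k"
      using in_configs_if_adj_weight_le_1 assms(2-4) cap \<open>G \<in> P\<close> by (metis subset_iff)
  qed
  define x where "x = (\<lambda>C. x' C + (if C \<in> P then t else 0))"
  have frac: "frac_solution I w k x" using assms(5,7) by (simp add: frac_solution_def x_def)
  have cover: "\<forall>i. cover I w k x i = cover I w k x' i + (if i \<in> A then t else 0)"
    using cover_add_uniform_on_partition[OF assms(1) \<open>P \<subseteq> _\<close> part] by (simp add: x_def)
  have norm: "sol_norm I w k x \<le> sol_norm I w k x' + t * (2 * sum (adj_weight w k) A + 1)"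
    using sol_norm_add_uniform[OF assms(1) \<open>P \<subseteq> _\<close>] mult_left_mono[OF card assms(5)]
    by (simp add: x_def)
  show ?thesis by (intro exI[of _ x] conjI frac cover norm)
qed

lemma frac_solution_for_small_items:
  fixes y :: "'a \<Rightarrow> real"
  assumes "finite I" "k > 0" "\<forall>i\<in>I. 0 \<le> w i"
    and "0 \<le> M" "\<forall>i\<in>I. 0 \<le> y i \<and> y i \<le> M"
    and "\<forall>i\<in>I. y i \<noteq> 0 \<longrightarrow> adj_weight w k i \<le> 1/2"
  shows "\<exists>x. frac_solution I w k x \<and> (\<forall>i\<in>I. cover I w k x i = y i)
           \<and> sol_norm I w k x \<le> 2 * (\<Sum>i\<in>I. y i * adj_weight w k i) + M"
  using assms(4-)
proof (induction "card {i\<in>I. y i \<noteq> 0}" arbitrary: y M rule: less_induct)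
  case less
  define A where "A = {i\<in>I. y i \<noteq> 0}"
  have finA: "finite A" using assms(1) by (simp add: A_def)
  show ?case
  proof (cases "A = {}")
    case True
    then show ?thesis using less.prems(1)
      by (intro exI[of _ "\<lambda>C. 0"]) (auto simp: A_def frac_solution_def cover_def sol_norm_def)
  next
    case False
    define t where "t = Min (y ` A)"
    have "t \<in> y ` A" using finA False by (simp add: t_def)
    then obtain j where j: "j \<in> A" "y j = t" by blast
    have t_le: "\<forall>i\<in>A. t \<le> y i" using finA by (simp add: t_def)
    have "0 < t" "t \<le> M" using j less.prems(2) by (force simp: A_def)+
    define y' where "y' = (\<lambda>i. if i \<in> A then y i - t else y i)"
    have "card {i\<in>I. y' i \<noteq> 0} \<le> card (A - {j})"
      using finA j by (intro card_mono) (auto simp: y'_def A_def)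
    also have "\<dots> < card A" using finA j(1) by (rule card_Diff1_less)
    finally have fewer: "card {i\<in>I. y' i \<noteq> 0} < card {i\<in>I. y i \<noteq> 0}"
      by (simp add: A_def)
    have "0 \<le> M - t" using \<open>t \<le> M\<close> by simp
    moreover have "\<forall>i\<in>I. 0 \<le> y' i \<and> y' i \<le> M - t"
      using less.prems(2) t_le \<open>t \<le> M\<close> by (auto simp: y'_def A_def)
    moreover have "\<forall>i\<in>I. y' i \<noteq> 0 \<longrightarrow> adj_weight w k i \<le> 1/2"
      using less.prems(3) by (auto simp: y'_def A_def)
    ultimately obtain x' where x': "frac_solution I w k x'" "\<forall>i\<in>I. cover I w k x' i = y' i"
      "sol_norm I w k x' \<le> 2 * (\<Sum>i\<in>I. y' i * adj_weight w k i) + (M - t)"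
      using less.hyps[OF fewer] by blast
    have "A \<subseteq> I" and "\<forall>i\<in>A. adj_weight w k i \<le> 1/2"
      using less.prems(3) by (auto simp: A_def)
    then obtain x where x: "frac_solution I w k x"
      "\<forall>i. cover I w k x i = cover I w k x' i + (if i \<in> A then t else 0)"
      "sol_norm I w k x \<le> sol_norm I w k x' + t * (2 * sum (adj_weight w k) A + 1)"
      using frac_solution_add_layer[OF assms(1-3) _ less_imp_le[OF \<open>0 < t\<close>] _ x'(1)] by blast
    have "(\<Sum>i\<in>I. y i * adj_weight w k i)
            = (\<Sum>i\<in>I. y' i * adj_weight w k i + t * (if i \<in> A then adj_weight w k i else 0))"
      by (rule sum.cong) (auto simp: y'_def algebra_simps)
    also have "\<dots> = (\<Sum>i\<in>I. y' i * adj_weight w k i) + t * sum (adj_weight w k) A"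
      using assms(1) by (simp add: sum.distrib sum_distrib_left A_def sum.inter_filter)
    finally have norm: "sol_norm I w k x \<le> 2 * (\<Sum>i\<in>I. y i * adj_weight w k i) + M"
      using x(3) x'(3) by (simp add: algebra_simps)
    have cover: "\<forall>i\<in>I. cover I w k x i = y i" using x(2) x'(2) by (simp add: y'_def)
    show ?thesis by (intro exI[of _ x] conjI x(1) cover norm)
  qed
qed

theorem lemma4p1:
  fixes I S :: "'a set" and w v y :: "'a \<Rightarrow> real" and m k :: nat and \<delta> :: real
  assumes "cmk_instance I w v m k"
    and "S \<subseteq> I"
    and "0 < \<delta>" and "\<delta> < 0.1" and "\<exists>n::nat. 1 / \<delta> = real n"
    and "L = {i \<in> S. adj_weight w k i \<ge> \<delta>}"
    and "\<forall>i\<in>I. 0 \<le> y i \<and> y i \<le> 1 \<and> y i \<in> \<rat>"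
    and "\<forall>i\<in>I. y i \<noteq> 0 \<longrightarrow> i \<in> S - L"
  shows "\<exists>x. frac_solution I w k x \<and> (\<forall>i\<in>I. cover I w k x i = y i)
           \<and> sol_norm I w k x \<le> 2 * (\<Sum>i\<in>I. y i * adj_weight w k i) + 1"
proof -
  have inst: "finite I" "k > 0" "\<forall>i\<in>I. 0 \<le> w i"
    using assms(1) by (auto simp: cmk_instance_def)
  have small: "\<forall>i\<in>I. y i \<noteq> 0 \<longrightarrow> adj_weight w k i \<le> 1/2"
    using assms(4,6,8) by auto
  have bounded: "\<forall>i\<in>I. 0 \<le> y i \<and> y i \<le> 1"
    using assms(7) by blast
  show ?thesis
    using frac_solution_for_small_items[OF inst zero_le_one bounded small] .
qed

end
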